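(* Fix a task $(\mathcal{S},\mathcal{A},\_,d_0,\mathcal{R},\gamma)$ and a set $\Pi$ of stationary policies containing a nonempty open subset of $\Pi^+$. Then every pair of transition models $(\mathcal{T},\mathcal{T}')$ with $J_{\mathcal{T}},J_{\mathcal{T}'}$ both non-trivial on $\Pi$ and not equivalent on $\Pi$ is exploitable relative to $\Pi$ and this task.
   Context: Setting: finite $\mathcal{S}$, finite $\mathcal{A}$ with $|\mathcal{A}|>1$, $d_0\in\Delta(\mathcal{S})$, $\mathcal{R}:\mathcal{S}\times\mathcal{A}\to\mathbb{R}$, $\gamma\in[0,1)$; transition models $\mathcal{T}:\mathcal{S}\times\mathcal{A}\to\Delta(\mathcal{S})$; all states reachable. A task is an MDP without its transition model. Stationary policies are identified with $\Delta(\mathcal{A})^{|\mathcal{S}|}\subset\mathbb{R}^{\mathcal{S}\times\mathcal{A}}$; $\Pi^+$ is the set with $\pi(a\mid s)>0$ for all $s,a$, and "open" means open in $\Pi^+$. $J_{\mathcal{T}}(\pi)=\mathbb{E}\big[\sum_{t\ge0}\gamma^t\mathcal{R}(s_t,a_t)\big]$ with $s_0\sim d_0$, $a_t\sim\pi(\cdot\mid s_t)$, $s_{t+1}\sim\mathcal{T}(\cdot\mid s_t,a_t)$. $J$ is trivial on $\Pi$ if constant on $\Pi$; $J_1,J_2$ equivalent on $\Pi$ if for all $\pi,\pi'\in\Pi$, $J_1(\pi)\ge J_1(\pi')\iff J_2(\pi)\ge J_2(\pi')$. $(\mathcal{T},\mathcal{T}')$ is exploitable relative to $\Pi$ if there are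 $\pi,\pi'\in\Pi$ with $J_{\mathcal{T}}(\pi)>J_{\mathcal{T}}(\pi')$ and $J_{\mathcal{T}'}(\pi')>J_{\mathcal{T}'}(\pi)$. *)

theory Defs
  imports "HOL-Analysis.Analysis"
begin

definition is_distrib :: "('x::finite \<Rightarrow> real) \<Rightarrow> bool" where
  "is_distrib p \<longleftrightarrow> (\<forall>x. p x \<ge> 0) \<and> (\<Sum>x\<in>UNIV. p x) = 1"

definition policies :: "('s::finite \<Rightarrow> 'a::finite \<Rightarrow> real) set" where
  "policies = {\<pi>. \<forall>s. is_distrib (\<pi> s)}"

definition policies_pos :: "('s::finite \<Rightarrow> 'a::finite \<Rightarrow> real) set" where
  "policies_pos = {\<pi> \<in> policies. \<forall>s a. \<pi> s a > 0}"

text \<open>Transition models T : S x A -> Delta(S); T s a s' is the probability of s'.\<close>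
definition transition_models :: "('s::finite \<Rightarrow> 'a::finite \<Rightarrow> 's \<Rightarrow> real) set" where
  "transition_models = {T. \<forall>s a. is_distrib (T s a)}"

text \<open>State distribution at time t: P(s_t = s) with s_0 ~ d0, a_t ~ pi(.|s_t),
  s_{t+1} ~ T(.|s_t,a_t).\<close>
fun state_dist :: "('s::finite \<Rightarrow> real) \<Rightarrow> ('s \<Rightarrow> 'a::finite \<Rightarrow> 's \<Rightarrow> real)
    \<Rightarrow> ('s \<Rightarrow> 'a \<Rightarrow> real) \<Rightarrow> nat \<Rightarrow> 's \<Rightarrow> real" where
  "state_dist d0 T \<pi> 0 s' = d0 s'"
| "state_dist d0 T \<pi> (Suc t) s' =
     (\<Sum>s\<in>UNIV. \<Sum>a\<in>UNIV. state_dist d0 T \<pi> t s * \<pi> s a * T s a s')"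

text \<open>J_T(pi) = E[ sum_t gamma^t R(s_t,a_t) ].\<close>
definition J :: "('s::finite \<Rightarrow> real) \<Rightarrow> ('s \<Rightarrow> 'a::finite \<Rightarrow> real) \<Rightarrow> real
    \<Rightarrow> ('s \<Rightarrow> 'a \<Rightarrow> 's \<Rightarrow> real) \<Rightarrow> ('s \<Rightarrow> 'a \<Rightarrow> real) \<Rightarrow> real" where
  "J d0 R \<gamma> T \<pi> =
     (\<Sum>t. \<gamma> ^ t * (\<Sum>s\<in>UNIV. \<Sum>a\<in>UNIV. state_dist d0 T \<pi> t s * \<pi> s a * R s a))"

definition all_reachable :: "('s::finite \<Rightarrow> real) \<Rightarrow> ('s \<Rightarrow> 'a::finite \<Rightarrow> 's \<Rightarrow> real) \<Rightarrow> bool" where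
  "all_reachable d0 T \<longleftrightarrow>
     (\<forall>s. \<exists>\<pi>\<in>(policies :: ('s \<Rightarrow> 'a \<Rightarrow> real) set). \<exists>t. state_dist d0 T \<pi> t s > 0)"

definition trivial_on :: "('p \<Rightarrow> real) \<Rightarrow> 'p set \<Rightarrow> bool" where
  "trivial_on f P \<longleftrightarrow> (\<forall>x\<in>P. \<forall>y\<in>P. f x = f y)"

definition equivalent_on :: "('p \<Rightarrow> real) \<Rightarrow> ('p \<Rightarrow> real) \<Rightarrow> 'p set \<Rightarrow> bool" where
  "equivalent_on f g P \<longleftrightarrow> (\<forall>x\<in>P. \<forall>y\<in>P. f x \<ge> f y \<longleftrightarrow> g x \<ge> g y)"

definition exploitable :: "('s::finite \<Rightarrow> real) \<Rightarrow> ('s \<Rightarrow> 'a::finite \<Rightarrow> real) \<Rightarrow> real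
    \<Rightarrow> ('s \<Rightarrow> 'a \<Rightarrow> 's \<Rightarrow> real) \<Rightarrow> ('s \<Rightarrow> 'a \<Rightarrow> 's \<Rightarrow> real)
    \<Rightarrow> ('s \<Rightarrow> 'a \<Rightarrow> real) set \<Rightarrow> bool" where
  "exploitable d0 R \<gamma> T T' P \<longleftrightarrow>
     (\<exists>\<pi>\<in>P. \<exists>\<pi>'\<in>P. J d0 R \<gamma> T \<pi> > J d0 R \<gamma> T \<pi>' \<and> J d0 R \<gamma> T' \<pi>' > J d0 R \<gamma> T' \<pi>)"

end

theory Submission
  imports Defs
begin

text \<open>
  Suppose \<open>(T, T')\<close> is not exploitable, i.e.\ \<open>J\<^sub>T x > J\<^sub>T y\<close> forces \<open>J\<^sub>T\<^sub>' x \<ge> J\<^sub>T\<^sub>' y\<close> on \<open>\<Pi>\<close>.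
  By Cramer's rule applied to the flow equations of the discounted occupancy measure, a value
  function is a quotient of polynomials along every segment of policies, and a quotient of affine
  functions (a Moebius function) along segments that change the policy at a single state.

  Work in a small box \<open>B\<close> of policies inside the given open set. If \<open>J\<^sub>T\<close> took equal values at two
  points of \<open>B\<close> where \<open>J\<^sub>T\<^sub>'\<close> differs, then near a point between them \<open>J\<^sub>T\<^sub>'\<close> lies strictly in
  between, which pins \<open>J\<^sub>T\<close> to a constant there, hence everywhere by rationality; this contradicts
  non-triviality. So level sets of \<open>J\<^sub>T\<close> and \<open>J\<^sub>T\<^sub>'\<close> agree on \<open>B\<close>. Two points of \<open>B\<close> differing at
  one state with different values give Moebius parametrisations of both functions; eliminating the
  parameter yields a non-degenerate relation \<open>(c J\<^sub>T + d) J\<^sub>T\<^sub>' = a J\<^sub>T + b\<close>, which holds near a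
  point of \<open>B\<close> and therefore, by rationality, on all policies. Such a relation determines each
  value from the other, so the two functions have the same ties, and together with
  non-exploitability this is equivalence.
\<close>

definition mix :: "('s \<Rightarrow> 'a \<Rightarrow> real) \<Rightarrow> ('s \<Rightarrow> 'a \<Rightarrow> real) \<Rightarrow> real \<Rightarrow> 's \<Rightarrow> 'a \<Rightarrow> real" where
  "mix u z t = (\<lambda>s a. (1 - t) * u s a + t * z s a)"

lemma mix_0 [simp]: "mix u z 0 = u" and mix_1 [simp]: "mix u z 1 = z"
  by (simp_all add: mix_def)

lemma mix_in_policies:
  assumes "u \<in> policies" "z \<in> policies" "0 \<le> t" "t \<le> 1"
  shows "mix u z t \<in> policies"
proof -
  have "(\<Sum>a\<in>UNIV. mix u z t s a) = (1 - t) * (\<Sum>a\<in>UNIV. u s a) + t * (\<Sum>a\<in>UNIV. z s a)" for s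
    by (simp add: mix_def sum.distrib sum_distrib_left)
  with assms show ?thesis
    by (auto simp: policies_def is_distrib_def mix_def)
qed

definition rational_on :: "real set \<Rightarrow> (real \<Rightarrow> real) \<Rightarrow> bool" where
  "rational_on S h \<longleftrightarrow> (\<exists>p q. real_polynomial_function p \<and> real_polynomial_function q \<and>
     (\<forall>t\<in>S. q t \<noteq> 0 \<and> h t = p t / q t))"

definition mobius_on :: "real set \<Rightarrow> (real \<Rightarrow> real) \<Rightarrow> bool" where
  "mobius_on S h \<longleftrightarrow> (\<exists>a b c d. \<forall>t\<in>S. c + d * t \<noteq> 0 \<and> h t = (a + b * t) / (c + d * t))"

definition affine_fun :: "(real \<Rightarrow> real) \<Rightarrow> bool" where
  "affine_fun f \<longleftrightarrow> (\<exists>a b. \<forall>t. f t = a + b * t)"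

lemma affine_fun_sum: "(\<And>i. i \<in> I \<Longrightarrow> affine_fun (f i)) \<Longrightarrow> affine_fun (\<lambda>t. \<Sum>i\<in>I. f i t)"
proof (induction I rule: infinite_finite_induct)
  case (insert i I)
  then obtain a b a' b' where "\<forall>t. f i t = a + b * t" "\<forall>t. (\<Sum>i\<in>I. f i t) = a' + b' * t"
    unfolding affine_fun_def by (metis insertCI)
  with insert.hyps show ?case
    unfolding affine_fun_def by (intro exI[of _ "a + a'"] exI[of _ "b + b'"]) (simp add: algebra_simps)
qed (auto simp: affine_fun_def intro: exI[of _ 0])

lemma affine_fun_const_mult: "affine_fun f \<Longrightarrow> affine_fun (\<lambda>t. c * f t)"
  unfolding affine_fun_def by (metis distrib_left mult.assoc)

lemma affine_fun_mult_const: "affine_fun f \<Longrightarrow> affine_fun (\<lambda>t. f t * c)"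
  using affine_fun_const_mult[of f c] by (simp add: mult.commute)

lemma real_polynomial_function_affine: "real_polynomial_function (\<lambda>t. a + t * (b - a))"
  by (intro real_polynomial_function.intros bounded_linear_ident)

lemma rational_onE:
  assumes "rational_on S h"
  obtains p q where "real_polynomial_function p" "real_polynomial_function q"
    "\<And>t. t \<in> S \<Longrightarrow> q t \<noteq> 0" "\<And>t. t \<in> S \<Longrightarrow> h t = p t / q t"
  using assms unfolding rational_on_def by auto

lemma rational_on_const: "rational_on S (\<lambda>t. c)"
  unfolding rational_on_def
  by (intro exI[of _ "\<lambda>t. c"] exI[of _ "\<lambda>t. 1"]) (simp add: real_polynomial_function.intros(2))

lemma rational_on_add:
  assumes "rational_on S f" "rational_on S g"
  shows "rational_on S (\<lambda>t. f t + g t)"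
proof -
  obtain p q where p: "real_polynomial_function p" "real_polynomial_function q"
    and f: "\<And>t. t \<in> S \<Longrightarrow> q t \<noteq> 0" "\<And>t. t \<in> S \<Longrightarrow> f t = p t / q t"
    using assms(1) by (rule rational_onE) (rule that)
  obtain p' q' where p': "real_polynomial_function p'" "real_polynomial_function q'"
    and g: "\<And>t. t \<in> S \<Longrightarrow> q' t \<noteq> 0" "\<And>t. t \<in> S \<Longrightarrow> g t = p' t / q' t"
    using assms(2) by (rule rational_onE) (rule that)
  have "real_polynomial_function (\<lambda>t. p t * q' t + p' t * q t)"
    by (intro real_polynomial_function.intros(3,4) p p')
  moreover have "real_polynomial_function (\<lambda>t. q t * q' t)"
    by (intro real_polynomial_function.intros(4) p p')
  moreover have "\<forall>t\<in>S. q t * q' t \<noteq> 0 \<and> f t + g t = (p t * q' t + p' t * q t) / (q t * q' t)"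
    using f g by (simp add: field_simps)
  ultimately show ?thesis
    unfolding rational_on_def by (intro exI conjI)
qed

lemma rational_on_mult:
  assumes "rational_on S f" "rational_on S g"
  shows "rational_on S (\<lambda>t. f t * g t)"
proof -
  obtain p q where p: "real_polynomial_function p" "real_polynomial_function q"
    and f: "\<And>t. t \<in> S \<Longrightarrow> q t \<noteq> 0" "\<And>t. t \<in> S \<Longrightarrow> f t = p t / q t"
    using assms(1) by (rule rational_onE) (rule that)
  obtain p' q' where p': "real_polynomial_function p'" "real_polynomial_function q'"
    and g: "\<And>t. t \<in> S \<Longrightarrow> q' t \<noteq> 0" "\<And>t. t \<in> S \<Longrightarrow> g t = p' t / q' t"
    using assms(2) by (rule rational_onE) (rule that)
  have "real_polynomial_function (\<lambda>t. p t * p' t)"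
    by (intro real_polynomial_function.intros(4) p p')
  moreover have "real_polynomial_function (\<lambda>t. q t * q' t)"
    by (intro real_polynomial_function.intros(4) p p')
  moreover have "\<forall>t\<in>S. q t * q' t \<noteq> 0 \<and> f t * g t = (p t * p' t) / (q t * q' t)"
    using f g by simp
  ultimately show ?thesis
    unfolding rational_on_def by (intro exI conjI)
qed

lemma rational_on_diff:
  assumes "rational_on S f" "rational_on S g"
  shows "rational_on S (\<lambda>t. f t - g t)"
  using rational_on_add[OF assms(1) rational_on_mult[OF rational_on_const[of S "-1"] assms(2)]]
  by simp

lemma continuous_on_rational_on: "rational_on S h \<Longrightarrow> continuous_on S h"
proof -
  assume "rational_on S h"
  then obtain p q where p: "real_polynomial_function p" "real_polynomial_function q"
    and q: "\<And>t. t \<in> S \<Longrightarrow> q t \<noteq> 0" and h: "\<And>t. t \<in> S \<Longrightarrow> h t = p t / q t"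
    by (rule rational_onE) (rule that)
  have "continuous_on S p" "continuous_on S q"
    using p by (simp_all add: continuous_on_polymonial_function real_polynomial_function_eq)
  with q have "continuous_on S (\<lambda>t. p t / q t)"
    by (intro continuous_on_divide) auto
  then show ?thesis
    by (rule continuous_on_eq) (simp add: h)
qed

lemma rational_on_tendsto_at_right_0:
  assumes "rational_on {0..1} h"
  shows "(h \<longlongrightarrow> h 0) (at_right 0)"
proof -
  have "(h \<longlongrightarrow> h 0) (at 0 within {0..1})"
    using continuous_on_rational_on[OF assms] by (simp add: continuous_on_def)
  then show ?thesis
    by (simp add: at_within_Icc_at_right)
qed

lemma real_polynomial_function_eventually_zero:
  fixes p :: "real \<Rightarrow> real"
  assumes "real_polynomial_function p" "eventually (\<lambda>t. p t = 0) (at_right 0)"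
  shows "p x = 0"
proof -
  obtain c n where p: "p = (\<lambda>x. \<Sum>i\<le>n. c i * x ^ i)"
    using assms(1) real_polynomial_function_iff_sum by blast
  obtain b :: real where "b > 0" and "\<forall>t>0. t < b \<longrightarrow> p t = 0"
    using assms(2) unfolding eventually_at_right_field by auto
  then have "{0<..<b} \<subseteq> {t. p t = 0}"
    by auto
  then have "infinite {t. p t = 0}"
    using infinite_Ioo[OF \<open>b > 0\<close>] finite_subset by blast
  then have "\<forall>k\<le>n. c k = 0"
    unfolding p using polyfun_finite_roots by blast
  then show ?thesis
    by (simp add: p)
qed

lemma eventually_at_right_0_in_unit_interval: "eventually (\<lambda>t. t \<in> {0..1}) (at_right (0::real))"
  unfolding eventually_at_right_field by (intro exI[of _ 1]) auto

lemma rational_on_eventually_zero: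
  assumes "rational_on {0..1} h" "eventually (\<lambda>t. h t = 0) (at_right 0)" "x \<in> {0..1}"
  shows "h x = 0"
proof -
  obtain p q where p: "real_polynomial_function p" "real_polynomial_function q"
    and h: "\<And>t. t \<in> {0..1} \<Longrightarrow> q t \<noteq> 0" "\<And>t. t \<in> {0..1} \<Longrightarrow> h t = p t / q t"
    using assms(1) by (rule rational_onE) (rule that)
  have "eventually (\<lambda>t. p t = 0) (at_right 0)"
    using assms(2) eventually_at_right_0_in_unit_interval by eventually_elim (use h in auto)
  with p(1) have "p x = 0"
    by (rule real_polynomial_function_eventually_zero)
  with assms(3) show ?thesis
    by (simp add: h)
qed

lemma real_polynomial_function_det:
  fixes M :: "real \<Rightarrow> real^'n::finite^'n"
  assumes "\<And>i j. real_polynomial_function (\<lambda>t. M t $ i $ j)"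
  shows "real_polynomial_function (\<lambda>t. det (M t))"
  unfolding det_def
  by (intro real_polynomial_function_sum real_polynomial_function_prod
      real_polynomial_function.intros finite_permutations finite assms)

lemma det_affine_in_one_column:
  fixes A B :: "real^'n::finite^'n"
  assumes "\<And>i j. j \<noteq> j0 \<Longrightarrow> B $ i $ j = A $ i $ j"
  shows "affine_fun (\<lambda>t. det (\<chi> i j. A $ i $ j + t * (B $ i $ j - A $ i $ j)))"
proof -
  let ?row = "\<lambda>c :: real^'n. \<chi> j. if j = j0 then c else transpose A $ j"
  have "det (\<chi> i j. A $ i $ j + t * (B $ i $ j - A $ i $ j)) =
      det (?row (transpose A $ j0)) + det (?row (transpose B $ j0 - transpose A $ j0)) * t" for t
  proof -
    have transposed: "transpose (\<chi> i j. A $ i $ j + t * (B $ i $ j - A $ i $ j))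
        = ?row (transpose A $ j0 + t *s (transpose B $ j0 - transpose A $ j0))"
      unfolding vec_eq_iff transpose_def using assms by simp (simp add: right_diff_distrib)
    have "det (\<chi> i j. A $ i $ j + t * (B $ i $ j - A $ i $ j))
        = det (?row (transpose A $ j0 + t *s (transpose B $ j0 - transpose A $ j0)))"
      using arg_cong[OF transposed, of det] by (simp only: det_transpose)
    also have "\<dots> = det (?row (transpose A $ j0)) + det (?row (t *s (transpose B $ j0 - transpose A $ j0)))"
      by (rule det_row_add)
    also have "\<dots> = det (?row (transpose A $ j0)) + det (?row (transpose B $ j0 - transpose A $ j0)) * t"
      by (subst det_row_mul) (simp only: mult.commute)
    finally show ?thesis .
  qed
  then show ?thesis
    unfolding affine_fun_def by blast
qed

section \<open>Discounted occupancy\<close>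

definition policy_transition ::
    "('s::finite \<Rightarrow> 'a::finite \<Rightarrow> 's \<Rightarrow> real) \<Rightarrow> ('s \<Rightarrow> 'a \<Rightarrow> real) \<Rightarrow> 's \<Rightarrow> 's \<Rightarrow> real" where
  "policy_transition T \<pi> s s' = (\<Sum>a\<in>UNIV. \<pi> s a * T s a s')"

definition policy_reward :: "('s \<Rightarrow> 'a::finite \<Rightarrow> real) \<Rightarrow> ('s \<Rightarrow> 'a \<Rightarrow> real) \<Rightarrow> 's \<Rightarrow> real" where
  "policy_reward R \<pi> s = (\<Sum>a\<in>UNIV. \<pi> s a * R s a)"

lemma policy_transition_mix:
  "policy_transition T (mix u z t) s s' =
     policy_transition T u s s' + t * (policy_transition T z s s' - policy_transition T u s s')"
  by (simp add: policy_transition_def mix_def algebra_simps sum.distrib sum_distrib_left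
      sum_subtractf)

lemma policy_reward_mix:
  "policy_reward R (mix u z t) s = policy_reward R u s + t * (policy_reward R z s - policy_reward R u s)"
  by (simp add: policy_reward_def mix_def algebra_simps sum.distrib sum_distrib_left sum_subtractf)

lemma policy_transition_nonneg:
  "\<pi> \<in> policies \<Longrightarrow> T \<in> transition_models \<Longrightarrow> policy_transition T \<pi> s s' \<ge> 0"
  unfolding policy_transition_def policies_def transition_models_def is_distrib_def
  by (auto intro!: sum_nonneg)

lemma sum_policy_transition:
  assumes "\<pi> \<in> policies" "T \<in> transition_models"
  shows "(\<Sum>s'\<in>UNIV. policy_transition T \<pi> s s') = 1"
proof -
  have "(\<Sum>s'\<in>UNIV. policy_transition T \<pi> s s') = (\<Sum>a\<in>UNIV. \<pi> s a * (\<Sum>s'\<in>UNIV. T s a s'))"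
    unfolding policy_transition_def sum_distrib_left by (rule sum.swap)
  with assms show ?thesis
    by (simp add: transition_models_def policies_def is_distrib_def)
qed

lemma state_dist_Suc_eq:
  "state_dist d0 T \<pi> (Suc t) s' = (\<Sum>s\<in>UNIV. state_dist d0 T \<pi> t s * policy_transition T \<pi> s s')"
  by (simp add: policy_transition_def sum_distrib_left mult.assoc)

lemma is_distrib_state_dist:
  assumes "is_distrib d0" "\<pi> \<in> policies" "T \<in> transition_models"
  shows "is_distrib (state_dist d0 T \<pi> t)"
proof (induction t)
  case 0
  then show ?case using assms(1) by simp
next
  case (Suc t)
  have "(\<Sum>s'\<in>UNIV. state_dist d0 T \<pi> (Suc t) s')
      = (\<Sum>s\<in>UNIV. state_dist d0 T \<pi> t s * (\<Sum>s'\<in>UNIV. policy_transition T \<pi> s s'))"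
    unfolding state_dist_Suc_eq sum_distrib_left by (rule sum.swap)
  with Suc show ?case
    using policy_transition_nonneg[OF assms(2,3)] sum_policy_transition[OF assms(2,3)]
    unfolding is_distrib_def state_dist_Suc_eq by (auto intro!: sum_nonneg)
qed

lemma is_distrib_le_1: "is_distrib p \<Longrightarrow> p x \<le> 1"
  unfolding is_distrib_def by (metis UNIV_I finite member_le_sum)

lemma summable_discounted_state_dist:
  assumes "is_distrib d0" "\<pi> \<in> policies" "T \<in> transition_models" "0 \<le> \<gamma>" "\<gamma> < 1"
  shows "summable (\<lambda>t. \<gamma> ^ t * state_dist d0 T \<pi> t s)"
proof (rule summable_comparison_test')
  show "summable (\<lambda>t. \<gamma> ^ t)" using assms(4,5) by simp
  show "norm (\<gamma> ^ t * state_dist d0 T \<pi> t s) \<le> \<gamma> ^ t" for t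
    using is_distrib_state_dist[OF assms(1-3), of t] is_distrib_le_1[of "state_dist d0 T \<pi> t" s] assms(4)
    by (simp add: abs_mult is_distrib_def mult_left_le)
qed

definition occupancy ::
    "('s::finite \<Rightarrow> real) \<Rightarrow> real \<Rightarrow> ('s \<Rightarrow> 'a::finite \<Rightarrow> 's \<Rightarrow> real) \<Rightarrow> ('s \<Rightarrow> 'a \<Rightarrow> real) \<Rightarrow> 's \<Rightarrow> real" where
  "occupancy d0 \<gamma> T \<pi> s = (\<Sum>t. \<gamma> ^ t * state_dist d0 T \<pi> t s)"

lemma occupancy_sums:
  assumes "is_distrib d0" "\<pi> \<in> policies" "T \<in> transition_models" "0 \<le> \<gamma>" "\<gamma> < 1"
  shows "(\<lambda>t. \<gamma> ^ t * state_dist d0 T \<pi> t s) sums occupancy d0 \<gamma> T \<pi> s"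
  unfolding occupancy_def by (rule summable_sums[OF summable_discounted_state_dist[OF assms]])

lemma J_eq_sum_occupancy:
  assumes "is_distrib d0" "\<pi> \<in> policies" "T \<in> transition_models" "0 \<le> \<gamma>" "\<gamma> < 1"
  shows "J d0 R \<gamma> T \<pi> = (\<Sum>s\<in>UNIV. occupancy d0 \<gamma> T \<pi> s * policy_reward R \<pi> s)"
proof -
  have "(\<lambda>t. \<Sum>s\<in>UNIV. \<gamma> ^ t * state_dist d0 T \<pi> t s * policy_reward R \<pi> s)
      sums (\<Sum>s\<in>UNIV. occupancy d0 \<gamma> T \<pi> s * policy_reward R \<pi> s)"
    by (intro sums_sum sums_mult2 occupancy_sums[OF assms])
  then show ?thesis
    unfolding J_def policy_reward_def by (simp add: sums_iff sum_distrib_left mult.assoc)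
qed

lemma occupancy_flow_equation:
  assumes "is_distrib d0" "\<pi> \<in> policies" "T \<in> transition_models" "0 \<le> \<gamma>" "\<gamma> < 1"
  shows "occupancy d0 \<gamma> T \<pi> s' =
           d0 s' + \<gamma> * (\<Sum>s\<in>UNIV. occupancy d0 \<gamma> T \<pi> s * policy_transition T \<pi> s s')"
proof -
  have "(\<lambda>t. \<gamma> * (\<Sum>s\<in>UNIV. \<gamma> ^ t * state_dist d0 T \<pi> t s * policy_transition T \<pi> s s'))
      sums (\<gamma> * (\<Sum>s\<in>UNIV. occupancy d0 \<gamma> T \<pi> s * policy_transition T \<pi> s s'))"
    by (intro sums_mult sums_sum sums_mult2 occupancy_sums[OF assms])
  then have "(\<lambda>t. \<gamma> ^ Suc t * state_dist d0 T \<pi> (Suc t) s')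
      sums (\<gamma> * (\<Sum>s\<in>UNIV. occupancy d0 \<gamma> T \<pi> s * policy_transition T \<pi> s s'))"
    unfolding state_dist_Suc_eq by (simp add: sum_distrib_left mult_ac)
  then have "(\<lambda>t. \<gamma> ^ t * state_dist d0 T \<pi> t s') sums
      (\<gamma> * (\<Sum>s\<in>UNIV. occupancy d0 \<gamma> T \<pi> s * policy_transition T \<pi> s s')
        + \<gamma> ^ 0 * state_dist d0 T \<pi> 0 s')"
    using sums_Suc_iff[of "\<lambda>t. \<gamma> ^ t * state_dist d0 T \<pi> t s'"] by blast
  with occupancy_sums[OF assms, of s'] show ?thesis
    using sums_unique2 by fastforce
qed

section \<open>The return by Cramer's rule\<close>

text \<open>Column \<open>j\<close> of the flow matrix depends on the policy only through its action distribution
  at state \<open>j\<close>.\<close>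

definition flow_matrix ::
    "real \<Rightarrow> ('s::finite \<Rightarrow> 'a::finite \<Rightarrow> 's \<Rightarrow> real) \<Rightarrow> ('s \<Rightarrow> 'a \<Rightarrow> real) \<Rightarrow> real^'s^'s" where
  "flow_matrix \<gamma> T \<pi> = (\<chi> i j. (if i = j then 1 else 0) - \<gamma> * policy_transition T \<pi> j i)"

lemma flow_matrix_mult_nth:
  "(flow_matrix \<gamma> T \<pi> *v x) $ i = x $ i - \<gamma> * (\<Sum>j\<in>UNIV. policy_transition T \<pi> j i * x $ j)"
  unfolding flow_matrix_def matrix_vector_mult_def
  by (simp add: left_diff_distrib sum_subtractf sum_distrib_left mult.assoc mult_if_delta)

lemma flow_matrix_mult_occupancy:
  assumes "is_distrib d0" "\<pi> \<in> policies" "T \<in> transition_models" "0 \<le> \<gamma>" "\<gamma> < 1"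
  shows "flow_matrix \<gamma> T \<pi> *v (\<chi> s. occupancy d0 \<gamma> T \<pi> s) = (\<chi> s. d0 s)"
proof -
  have "(flow_matrix \<gamma> T \<pi> *v (\<chi> s. occupancy d0 \<gamma> T \<pi> s)) $ i = d0 i" for i
    using occupancy_flow_equation[OF assms, of i] by (simp add: flow_matrix_mult_nth mult.commute)
  then show ?thesis
    by (simp add: vec_eq_iff)
qed

lemma sum_abs_transposed_transition_le:
  assumes "\<pi> \<in> policies" "T \<in> transition_models"
  shows "(\<Sum>i\<in>UNIV. \<bar>\<Sum>j\<in>UNIV. policy_transition T \<pi> j i * x j\<bar>) \<le> (\<Sum>j\<in>UNIV. \<bar>x j\<bar>)"
proof -
  have "(\<Sum>i\<in>UNIV. \<bar>\<Sum>j\<in>UNIV. policy_transition T \<pi> j i * x j\<bar>)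
      \<le> (\<Sum>i\<in>UNIV. \<Sum>j\<in>UNIV. policy_transition T \<pi> j i * \<bar>x j\<bar>)"
    using policy_transition_nonneg[OF assms]
    by (intro sum_mono order.trans[OF sum_abs]) (simp add: abs_mult)
  also have "\<dots> = (\<Sum>j\<in>UNIV. \<bar>x j\<bar> * (\<Sum>i\<in>UNIV. policy_transition T \<pi> j i))"
    by (subst sum.swap) (simp add: sum_distrib_left mult.commute)
  also have "\<dots> = (\<Sum>j\<in>UNIV. \<bar>x j\<bar>)"
    by (simp add: sum_policy_transition[OF assms])
  finally show ?thesis .
qed

lemma det_flow_matrix_nonzero:
  assumes "\<pi> \<in> policies" "T \<in> transition_models" "0 \<le> \<gamma>" "\<gamma> < 1"
  shows "det (flow_matrix \<gamma> T \<pi>) \<noteq> 0"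
proof -
  have "x = 0" if x: "flow_matrix \<gamma> T \<pi> *v x = 0" for x
  proof -
    have "\<bar>x $ i\<bar> = \<gamma> * \<bar>\<Sum>j\<in>UNIV. policy_transition T \<pi> j i * x $ j\<bar>" for i
      using arg_cong[OF x, of "\<lambda>v. v $ i"] assms(3) by (simp add: flow_matrix_mult_nth abs_mult)
    then have "(\<Sum>i\<in>UNIV. \<bar>x $ i\<bar>) = \<gamma> * (\<Sum>i\<in>UNIV. \<bar>\<Sum>j\<in>UNIV. policy_transition T \<pi> j i * x $ j\<bar>)"
      by (simp add: sum_distrib_left)
    also have "\<dots> \<le> \<gamma> * (\<Sum>j\<in>UNIV. \<bar>x $ j\<bar>)"
      using sum_abs_transposed_transition_le[OF assms(1,2)] assms(3) by (rule mult_left_mono)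
    finally have "(1 - \<gamma>) * (\<Sum>i\<in>UNIV. \<bar>x $ i\<bar>) \<le> 0"
      by (simp add: algebra_simps)
    then have "(\<Sum>i\<in>UNIV. \<bar>x $ i\<bar>) = 0"
      using assms(4) by (simp add: mult_le_0_iff order.antisym sum_nonneg)
    then show "x = 0"
      by (simp add: vec_eq_iff sum_nonneg_eq_0_iff)
  qed
  then show ?thesis
    by (simp add: invertible_det_nz[symmetric] invertible_left_inverse
        matrix_left_invertible_injective vec.inj_iff_eq_0)
qed

definition cramer_matrix :: "('s::finite \<Rightarrow> real) \<Rightarrow> real \<Rightarrow> ('s \<Rightarrow> 'a::finite \<Rightarrow> 's \<Rightarrow> real)
    \<Rightarrow> ('s \<Rightarrow> 'a \<Rightarrow> real) \<Rightarrow> 's \<Rightarrow> real^'s^'s" where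
  "cramer_matrix d0 \<gamma> T \<pi> k = (\<chi> i j. if j = k then d0 i else flow_matrix \<gamma> T \<pi> $ i $ j)"

definition cramer_numerator :: "('s::finite \<Rightarrow> real) \<Rightarrow> ('s \<Rightarrow> 'a::finite \<Rightarrow> real) \<Rightarrow> real
    \<Rightarrow> ('s \<Rightarrow> 'a \<Rightarrow> 's \<Rightarrow> real) \<Rightarrow> ('s \<Rightarrow> 'a \<Rightarrow> real) \<Rightarrow> real" where
  "cramer_numerator d0 R \<gamma> T \<pi> = (\<Sum>k\<in>UNIV. policy_reward R \<pi> k * det (cramer_matrix d0 \<gamma> T \<pi> k))"

lemma J_eq_cramer:
  assumes "is_distrib d0" "\<pi> \<in> policies" "T \<in> transition_models" "0 \<le> \<gamma>" "\<gamma> < 1"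
  shows "J d0 R \<gamma> T \<pi> = cramer_numerator d0 R \<gamma> T \<pi> / det (flow_matrix \<gamma> T \<pi>)"
proof -
  have "cramer_matrix d0 \<gamma> T \<pi> k = (\<chi> i j. if j = k
      then (flow_matrix \<gamma> T \<pi> *v (\<chi> s. occupancy d0 \<gamma> T \<pi> s)) $ i else flow_matrix \<gamma> T \<pi> $ i $ j)" for k
    unfolding cramer_matrix_def flow_matrix_mult_occupancy[OF assms] by (simp add: vec_eq_iff)
  then have "det (cramer_matrix d0 \<gamma> T \<pi> k) = occupancy d0 \<gamma> T \<pi> k * det (flow_matrix \<gamma> T \<pi>)" for k
    by (simp add: cramer_lemma)
  then have "cramer_numerator d0 R \<gamma> T \<pi> = J d0 R \<gamma> T \<pi> * det (flow_matrix \<gamma> T \<pi>)"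
    by (simp add: cramer_numerator_def J_eq_sum_occupancy[OF assms] sum_distrib_left mult_ac)
  then show ?thesis
    using det_flow_matrix_nonzero[OF assms(2-5)] by simp
qed

definition rational_along_segments :: "(('s::finite \<Rightarrow> 'a::finite \<Rightarrow> real) \<Rightarrow> real) \<Rightarrow> bool" where
  "rational_along_segments f \<longleftrightarrow>
     (\<forall>u\<in>policies. \<forall>z\<in>policies. rational_on {0..1} (\<lambda>t. f (mix u z t)))"

definition mobius_along_state_changes :: "(('s::finite \<Rightarrow> 'a::finite \<Rightarrow> real) \<Rightarrow> real) \<Rightarrow> bool" where
  "mobius_along_state_changes f \<longleftrightarrow>
     (\<forall>w\<in>policies. \<forall>w'\<in>policies. \<forall>s0. (\<forall>s. s \<noteq> s0 \<longrightarrow> w s = w' s) \<longrightarrow>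
        mobius_on {0..1} (\<lambda>t. f (mix w w' t)))"

lemma flow_matrix_mix:
  "flow_matrix \<gamma> T (mix u z t) =
     (\<chi> i j. flow_matrix \<gamma> T u $ i $ j + t * (flow_matrix \<gamma> T z $ i $ j - flow_matrix \<gamma> T u $ i $ j))"
  by (simp add: vec_eq_iff flow_matrix_def policy_transition_mix algebra_simps)

lemma cramer_matrix_mix:
  "cramer_matrix d0 \<gamma> T (mix u z t) k =
     (\<chi> i j. cramer_matrix d0 \<gamma> T u k $ i $ j +
        t * (cramer_matrix d0 \<gamma> T z k $ i $ j - cramer_matrix d0 \<gamma> T u k $ i $ j))"
  by (simp add: vec_eq_iff cramer_matrix_def flow_matrix_mix)

lemma J_rational_along_segments:
  fixes T :: "'s::finite \<Rightarrow> 'a::finite \<Rightarrow> 's \<Rightarrow> real"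
  assumes "is_distrib d0" "T \<in> transition_models" "0 \<le> \<gamma>" "\<gamma> < 1"
  shows "rational_along_segments (J d0 R \<gamma> T)"
  unfolding rational_along_segments_def
proof (intro ballI)
  fix u z :: "'s \<Rightarrow> 'a \<Rightarrow> real"
  assume "u \<in> policies" "z \<in> policies"
  have "real_polynomial_function (\<lambda>t. det (cramer_matrix d0 \<gamma> T (mix u z t) k))" for k
    by (intro real_polynomial_function_det) (simp add: cramer_matrix_mix real_polynomial_function_affine)
  moreover have "real_polynomial_function (\<lambda>t. policy_reward R (mix u z t) k)" for k
    by (simp add: policy_reward_mix real_polynomial_function_affine)
  ultimately have "real_polynomial_function (\<lambda>t. cramer_numerator d0 R \<gamma> T (mix u z t))"
    unfolding cramer_numerator_def
    by (intro real_polynomial_function_sum real_polynomial_function.intros(4) finite)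
  moreover have "real_polynomial_function (\<lambda>t. det (flow_matrix \<gamma> T (mix u z t)))"
    by (intro real_polynomial_function_det) (simp add: flow_matrix_mix real_polynomial_function_affine)
  moreover have "det (flow_matrix \<gamma> T (mix u z t)) \<noteq> 0 \<and>
      J d0 R \<gamma> T (mix u z t) = cramer_numerator d0 R \<gamma> T (mix u z t) / det (flow_matrix \<gamma> T (mix u z t))"
    if "t \<in> {0..1}" for t
  proof -
    have "mix u z t \<in> policies"
      using that \<open>u \<in> policies\<close> \<open>z \<in> policies\<close> by (simp add: mix_in_policies)
    with assms show ?thesis
      by (simp add: det_flow_matrix_nonzero J_eq_cramer)
  qed
  ultimately show "rational_on {0..1} (\<lambda>t. J d0 R \<gamma> T (mix u z t))"
    unfolding rational_on_def by blast
qed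

lemma affine_det_flow_matrix_along_state_change:
  assumes "\<And>s. s \<noteq> s0 \<Longrightarrow> w s = w' s"
  shows "affine_fun (\<lambda>t. det (flow_matrix \<gamma> T (mix w w' t)))"
proof -
  have "flow_matrix \<gamma> T w' $ i $ j = flow_matrix \<gamma> T w $ i $ j" if "j \<noteq> s0" for i j
    using assms that by (simp add: flow_matrix_def policy_transition_def)
  then show ?thesis
    using det_affine_in_one_column[of s0 "flow_matrix \<gamma> T w'" "flow_matrix \<gamma> T w"]
    by (simp add: flow_matrix_mix)
qed

lemma affine_cramer_numerator_along_state_change:
  assumes same: "\<And>s. s \<noteq> s0 \<Longrightarrow> w s = w' s"
  shows "affine_fun (\<lambda>t. cramer_numerator d0 R \<gamma> T (mix w w' t))"
  unfolding cramer_numerator_def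
proof (intro affine_fun_sum)
  fix k
  have cramer_same: "cramer_matrix d0 \<gamma> T w' k $ i $ j = cramer_matrix d0 \<gamma> T w k $ i $ j"
    if "j \<noteq> s0 \<or> j = k" for i j
    using same that by (auto simp: cramer_matrix_def flow_matrix_def policy_transition_def)
  show "affine_fun (\<lambda>t. policy_reward R (mix w w' t) k * det (cramer_matrix d0 \<gamma> T (mix w w' t) k))"
  proof (cases "k = s0")
    case True
    then have "cramer_matrix d0 \<gamma> T (mix w w' t) k = cramer_matrix d0 \<gamma> T w k" for t
      using cramer_same by (simp add: vec_eq_iff cramer_matrix_mix)
    moreover have "affine_fun (\<lambda>t. policy_reward R (mix w w' t) k)"
      unfolding affine_fun_def policy_reward_mix by (metis mult.commute)
    ultimately show ?thesis
      by (simp add: affine_fun_mult_const)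
  next
    case False
    then have "policy_reward R (mix w w' t) k = policy_reward R w k" for t
      using same by (simp add: policy_reward_def mix_def algebra_simps)
    moreover have "affine_fun (\<lambda>t. det (cramer_matrix d0 \<gamma> T (mix w w' t) k))"
      using det_affine_in_one_column[of s0 "cramer_matrix d0 \<gamma> T w' k" "cramer_matrix d0 \<gamma> T w k"]
        cramer_same by (simp add: cramer_matrix_mix)
    ultimately show ?thesis
      by (simp add: affine_fun_const_mult)
  qed
qed

lemma J_mobius_along_state_changes:
  fixes T :: "'s::finite \<Rightarrow> 'a::finite \<Rightarrow> 's \<Rightarrow> real"
  assumes "is_distrib d0" "T \<in> transition_models" "0 \<le> \<gamma>" "\<gamma> < 1"
  shows "mobius_along_state_changes (J d0 R \<gamma> T)"
  unfolding mobius_along_state_changes_def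
proof (intro ballI allI impI)
  fix w w' :: "'s \<Rightarrow> 'a \<Rightarrow> real" and s0
  assume w: "w \<in> policies" "w' \<in> policies" and same: "\<forall>s. s \<noteq> s0 \<longrightarrow> w s = w' s"
  obtain a b where ab: "\<And>t. cramer_numerator d0 R \<gamma> T (mix w w' t) = a + b * t"
    using affine_cramer_numerator_along_state_change[of s0 w w'] same unfolding affine_fun_def by blast
  obtain c d where cd: "\<And>t. det (flow_matrix \<gamma> T (mix w w' t)) = c + d * t"
    using affine_det_flow_matrix_along_state_change[of s0 w w'] same unfolding affine_fun_def by blast
  have "c + d * t \<noteq> 0 \<and> J d0 R \<gamma> T (mix w w' t) = (a + b * t) / (c + d * t)" if "t \<in> {0..1}" for t
  proof -
    have "mix w w' t \<in> policies"
      using that w by (simp add: mix_in_policies)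
    with assms show ?thesis
      using det_flow_matrix_nonzero[of "mix w w' t" T \<gamma>] J_eq_cramer[of d0 "mix w w' t" T \<gamma> R]
      by (simp add: ab cd)
  qed
  then show "mobius_on {0..1} (\<lambda>t. J d0 R \<gamma> T (mix w w' t))"
    unfolding mobius_on_def by blast
qed

section \<open>Moebius relations\<close>

definition mobius_rel :: "real \<Rightarrow> real \<Rightarrow> real \<Rightarrow> real \<Rightarrow> real \<Rightarrow> real \<Rightarrow> bool" where
  "mobius_rel a b c d v x \<longleftrightarrow> (c * v + d) * x = a * v + b"

lemma mobius_rel_right_unique:
  assumes "a * d - b * c \<noteq> 0" "mobius_rel a b c d v x" "mobius_rel a b c d v x'"
  shows "x = x'"
proof -
  have "c * v + d \<noteq> 0"
  proof
    assume "c * v + d = 0"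
    with assms(2) have "d = - c * v" "b = - a * v"
      by (simp_all add: mobius_rel_def eq_neg_iff_add_eq_0)
    with assms(1) show False
      by simp
  qed
  with assms(2,3) show ?thesis
    unfolding mobius_rel_def by (metis mult_cancel_left)
qed

lemma mobius_rel_left_unique:
  assumes "a * d - b * c \<noteq> 0" "mobius_rel a b c d v x" "mobius_rel a b c d v' x"
  shows "v = v'"
proof -
  have "(c * x - a) * v = b - d * x" "(c * x - a) * v' = b - d * x"
    using assms(2,3) unfolding mobius_rel_def by (simp_all add: algebra_simps)
  moreover have "c * x - a \<noteq> 0"
  proof
    assume "c * x - a = 0"
    with \<open>(c * x - a) * v = b - d * x\<close> have "a = c * x" "b = d * x"
      by simp_all
    with assms(1) show False
      by simp
  qed
  ultimately show ?thesis
    by (metis mult_cancel_left)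
qed

lemma mobius_rel_of_mobius_on:
  assumes "mobius_on {0..1} \<phi>" "mobius_on {0..1} \<psi>" "\<phi> 0 \<noteq> \<phi> 1" "\<psi> 0 \<noteq> \<psi> 1"
  shows "\<exists>a b c d. a * d - b * c \<noteq> 0 \<and> (\<forall>t\<in>{0..1}. mobius_rel a b c d (\<phi> t) (\<psi> t))"
proof -
  obtain a1 b1 c1 d1 where \<phi>: "\<And>t. t \<in> {0..1} \<Longrightarrow> c1 + d1 * t \<noteq> 0 \<and> \<phi> t = (a1 + b1 * t) / (c1 + d1 * t)"
    using assms(1) unfolding mobius_on_def by blast
  obtain a2 b2 c2 d2 where \<psi>: "\<And>t. t \<in> {0..1} \<Longrightarrow> c2 + d2 * t \<noteq> 0 \<and> \<psi> t = (a2 + b2 * t) / (c2 + d2 * t)"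
    using assms(2) unfolding mobius_on_def by blast
  \<comment> \<open>The coefficients of \<open>\<psi> \<circ> \<phi>\<inverse>\<close>: the product of the matrices of \<open>\<psi>\<close> and of the adjugate of \<open>\<phi>\<close>.\<close>
  define a b c d where "a = b2 * c1 - a2 * d1" and "b = a2 * b1 - a1 * b2"
    and "c = c1 * d2 - c2 * d1" and "d = b1 * c2 - a1 * d2"
  define k where "k = b1 * c1 - a1 * d1"
  have "k \<noteq> 0"
  proof
    assume "k = 0"
    with \<phi>[of 0] \<phi>[of 1] have "\<phi> 0 = \<phi> 1"
      by (simp add: k_def field_simps)
    with assms(3) show False ..
  qed
  moreover have "b2 * c2 - a2 * d2 \<noteq> 0"
  proof
    assume "b2 * c2 - a2 * d2 = 0"
    with \<psi>[of 0] \<psi>[of 1] have "\<psi> 0 = \<psi> 1"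
      by (simp add: field_simps)
    with assms(4) show False ..
  qed
  moreover have "a * d - b * c = k * (b2 * c2 - a2 * d2)"
    unfolding a_def b_def c_def d_def k_def by (simp add: algebra_simps)
  ultimately have "a * d - b * c \<noteq> 0"
    by simp
  moreover have "mobius_rel a b c d (\<phi> t) (\<psi> t)" if "t \<in> {0..1}" for t
  proof -
    have "c * \<phi> t + d = (c * (a1 + b1 * t) + d * (c1 + d1 * t)) / (c1 + d1 * t)"
      "a * \<phi> t + b = (a * (a1 + b1 * t) + b * (c1 + d1 * t)) / (c1 + d1 * t)"
      using \<phi>[OF that] by (simp_all add: field_simps)
    moreover have "c * (a1 + b1 * t) + d * (c1 + d1 * t) = k * (c2 + d2 * t)"
      "a * (a1 + b1 * t) + b * (c1 + d1 * t) = k * (a2 + b2 * t)"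
      unfolding a_def b_def c_def d_def k_def by (simp_all add: algebra_simps)
    ultimately show ?thesis
      using \<psi>[OF that] by (simp add: mobius_rel_def)
  qed
  ultimately show ?thesis
    by blast
qed

section \<open>Unexploitable pairs are equivalent\<close>

text \<open>\<open>f\<close> and \<open>g\<close> stand for \<open>J\<^sub>T\<close> and \<open>J\<^sub>T\<^sub>'\<close>, and \<open>B\<close> for a small box of policies around \<open>u\<close>
  inside the given open set.\<close>

locale unexploitable_pair =
  fixes f g :: "('s::finite \<Rightarrow> 'a::finite \<Rightarrow> real) \<Rightarrow> real"
    and P B :: "('s \<Rightarrow> 'a \<Rightarrow> real) set"
    and u :: "'s \<Rightarrow> 'a \<Rightarrow> real"
  assumes rational_f: "rational_along_segments f"
    and rational_g: "rational_along_segments g"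
    and mobius_f: "mobius_along_state_changes f"
    and mobius_g: "mobius_along_state_changes g"
    and P_policies: "P \<subseteq> policies"
    and B_P: "B \<subseteq> P"
    and u_B: "u \<in> B"
    and B_mix: "\<And>w w' t. w \<in> B \<Longrightarrow> w' \<in> B \<Longrightarrow> 0 \<le> t \<Longrightarrow> t \<le> 1 \<Longrightarrow> mix w w' t \<in> B"
    and B_open: "\<And>w z. w \<in> B \<Longrightarrow> z \<in> policies \<Longrightarrow> eventually (\<lambda>t. mix w z t \<in> B) (at_right 0)"
    and B_reset: "\<And>w s. w \<in> B \<Longrightarrow> w(s := u s) \<in> B"
    and f_nontrivial: "\<not> trivial_on f P"
    and g_nontrivial: "\<not> trivial_on g P"
    and no_exploit: "\<And>x y. x \<in> P \<Longrightarrow> y \<in> P \<Longrightarrow> f x > f y \<Longrightarrow> g x \<ge> g y"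
begin

lemma B_policies: "B \<subseteq> policies"
  using B_P P_policies by blast

lemma rational_f_mix: "w \<in> policies \<Longrightarrow> z \<in> policies \<Longrightarrow> rational_on {0..1} (\<lambda>t. f (mix w z t))"
  using rational_f by (simp add: rational_along_segments_def)

lemma swap: "unexploitable_pair g f P B u"
proof unfold_locales
  show "f y \<le> f x" if "x \<in> P" "y \<in> P" "g y < g x" for x y
    using no_exploit[OF that(2,1)] that(3) by fastforce
qed (fact rational_g rational_f mobius_g mobius_f P_policies B_P u_B B_mix B_open B_reset
    g_nontrivial f_nontrivial)+

lemma not_eventually_constant:
  assumes "w \<in> policies" "\<And>z. z \<in> policies \<Longrightarrow> eventually (\<lambda>t. f (mix w z t) = c) (at_right 0)"
  shows False
proof -
  have "f z = c" if "z \<in> policies" for z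
  proof -
    have "rational_on {0..1} (\<lambda>t. f (mix w z t) - c)"
      by (intro rational_on_diff rational_f_mix assms(1) that rational_on_const)
    moreover have "eventually (\<lambda>t. f (mix w z t) - c = 0) (at_right 0)"
      using assms(2)[OF that] by eventually_elim simp
    ultimately show ?thesis
      using rational_on_eventually_zero[of "\<lambda>t. f (mix w z t) - c" 1] by simp
  qed
  then show False
    using f_nontrivial P_policies unfolding trivial_on_def by (metis subsetD)
qed

lemma eventually_mix_between:
  assumes "w \<in> B" "z \<in> policies" "lo < f w" "f w < hi"
  shows "eventually (\<lambda>t. mix w z t \<in> B \<and> lo < f (mix w z t) \<and> f (mix w z t) < hi) (at_right 0)"
proof -
  have tendsto: "((\<lambda>t. f (mix w z t)) \<longlongrightarrow> f w) (at_right 0)"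
    using rational_on_tendsto_at_right_0[OF rational_f_mix[OF _ assms(2)]] assms(1) B_policies by auto
  show ?thesis
    using B_open[OF assms(1,2)] order_tendstoD(1)[OF tendsto assms(3)] order_tendstoD(2)[OF tendsto assms(4)]
    by (intro eventually_conj)
qed

lemma mix_attains:
  assumes "w \<in> B" "w' \<in> B" "min (f w) (f w') \<le> v" "v \<le> max (f w) (f w')"
  shows "\<exists>t\<in>{0..1}. f (mix w w' t) = v"
proof -
  have "continuous_on {0..1} (\<lambda>t. f (mix w w' t))"
    using continuous_on_rational_on rational_f_mix assms(1,2) B_policies by blast
  then show ?thesis
    using assms(3,4) IVT'[of "\<lambda>t. f (mix w w' t)" 0 v 1] IVT2'[of "\<lambda>t. f (mix w w' t)" 1 v 0]
    by (cases "f w \<le> f w'") auto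
qed

lemma f_eq_if_g_between:
  assumes "w1 \<in> P" "w2 \<in> P" "f w1 = f w2" "x \<in> P" "g w1 < g x" "g x < g w2"
  shows "f x = f w1"
  using no_exploit[OF assms(4,2)] no_exploit[OF assms(1,4)] assms(3,5,6) by fastforce

lemma g_not_less_if_f_eq:
  assumes w1: "w1 \<in> B" and w2: "w2 \<in> B" and "f w1 = f w2"
  shows "\<not> g w1 < g w2"
proof
  assume less: "g w1 < g w2"
  \<comment> \<open>Near a point of the segment where \<open>g\<close> lies strictly between \<open>g w1\<close> and \<open>g w2\<close>,
    non-exploitability pins \<open>f\<close> to \<open>f w1\<close>.\<close>
  obtain t where t: "t \<in> {0..1}" "g (mix w1 w2 t) = (g w1 + g w2) / 2"
    using unexploitable_pair.mix_attains[OF swap w1 w2, of "(g w1 + g w2) / 2"] less by auto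
  define m where "m = mix w1 w2 t"
  have "m \<in> B"
    unfolding m_def using B_mix w1 w2 t by auto
  show False
  proof (rule not_eventually_constant)
    show "m \<in> policies"
      using \<open>m \<in> B\<close> B_policies by blast
    have gm: "g w1 < g m" "g m < g w2"
      using t less by (simp_all add: m_def)
    show "eventually (\<lambda>t. f (mix m z t) = f w1) (at_right 0)" if "z \<in> policies" for z
      using unexploitable_pair.eventually_mix_between[OF swap \<open>m \<in> B\<close> that gm]
      by eventually_elim (use f_eq_if_g_between[OF _ _ \<open>f w1 = f w2\<close>] w1 w2 B_P in blast)
  qed
qed

lemma g_eq_if_f_eq: "w1 \<in> B \<Longrightarrow> w2 \<in> B \<Longrightarrow> f w1 = f w2 \<Longrightarrow> g w1 = g w2"
  using g_not_less_if_f_eq[of w1 w2] g_not_less_if_f_eq[of w2 w1] by fastforce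

lemma exists_single_state_change:
  "\<exists>w\<in>B. \<exists>w'\<in>B. \<exists>s0. (\<forall>s. s \<noteq> s0 \<longrightarrow> w s = w' s) \<and> f w \<noteq> f w'"
proof (rule ccontr)
  assume "\<not> ?thesis"
  then have single: "f w = f w'" if "w \<in> B" "w' \<in> B" "\<forall>s. s \<noteq> s0 \<longrightarrow> w s = w' s" for w w' s0
    using that by blast
  \<comment> \<open>Reset the states where \<open>w\<close> differs from \<open>u\<close> one at a time.\<close>
  have f_B: "f w = f u" if "w \<in> B" for w
    using that
  proof (induction "card {s. w s \<noteq> u s}" arbitrary: w)
    case 0
    then have "{s. w s \<noteq> u s} = {}"
      by simp
    then show ?case
      by (metis (mono_tags, lifting) empty_Collect_eq ext)
  next
    case (Suc n)
    then obtain s where s: "w s \<noteq> u s"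
      by (metis (mono_tags, lifting) card.empty empty_Collect_eq nat.distinct(1))
    define w' where "w' = w(s := u s)"
    have "{s'. w' s' \<noteq> u s'} = {s'. w s' \<noteq> u s'} - {s}"
      by (auto simp: w'_def)
    then have "n = card {s'. w' s' \<noteq> u s'}"
      using Suc.hyps(2) s by simp
    moreover have "w' \<in> B"
      unfolding w'_def by (rule B_reset[OF Suc.prems])
    ultimately have "f w' = f u"
      by (rule Suc.hyps(1))
    moreover have "f w' = f w"
      using single[OF \<open>w' \<in> B\<close> Suc.prems, of s] by (simp add: w'_def)
    ultimately show ?case
      by simp
  qed
  show False
  proof (rule not_eventually_constant)
    show "u \<in> policies"
      using u_B B_policies by blast
    show "eventually (\<lambda>t. f (mix u z t) = f u) (at_right 0)" if "z \<in> policies" for z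
      using B_open[OF u_B that] by eventually_elim (rule f_B)
  qed
qed

lemma mobius_rel_extends:
  assumes "w \<in> policies" "z \<in> policies"
    and "\<And>z. z \<in> policies \<Longrightarrow>
           eventually (\<lambda>t. mobius_rel a b c d (f (mix w z t)) (g (mix w z t))) (at_right 0)"
  shows "mobius_rel a b c d (f z) (g z)"
proof -
  have rational: "rational_on {0..1} (\<lambda>t. (c * f (mix w z t) + d) * g (mix w z t) - (a * f (mix w z t) + b))"
    by (intro rational_on_diff rational_on_add rational_on_mult rational_on_const
        rational_f_mix unexploitable_pair.rational_f_mix[OF swap] assms(1,2))
  have "eventually (\<lambda>t. (c * f (mix w z t) + d) * g (mix w z t) - (a * f (mix w z t) + b) = 0)
      (at_right 0)"
    using assms(3)[OF assms(2)] by eventually_elim (simp add: mobius_rel_def)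
  with rational have "(c * f (mix w z 1) + d) * g (mix w z 1) - (a * f (mix w z 1) + b) = 0"
    by (rule rational_on_eventually_zero) simp
  then show ?thesis
    by (simp add: mobius_rel_def)
qed

lemma mobius_relation_on_segment:
  "\<exists>w\<in>B. \<exists>w'\<in>B. f w \<noteq> f w' \<and> (\<exists>a b c d. a * d - b * c \<noteq> 0 \<and>
     (\<forall>t\<in>{0..1}. mobius_rel a b c d (f (mix w w' t)) (g (mix w w' t))))"
proof -
  obtain w w' s0 where w: "w \<in> B" "w' \<in> B" and same: "\<forall>s. s \<noteq> s0 \<longrightarrow> w s = w' s"
    and "f w \<noteq> f w'"
    using exists_single_state_change by blast
  then have "g w \<noteq> g w'"
    using unexploitable_pair.g_eq_if_f_eq[OF swap w] by blast
  have "w \<in> policies" "w' \<in> policies"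
    using w B_policies by auto
  have "mobius_on {0..1} (\<lambda>t. f (mix w w' t))" "mobius_on {0..1} (\<lambda>t. g (mix w w' t))"
    using mobius_f mobius_g \<open>w \<in> policies\<close> \<open>w' \<in> policies\<close> same
    unfolding mobius_along_state_changes_def by blast+
  moreover have "f (mix w w' 0) \<noteq> f (mix w w' 1)" "g (mix w w' 0) \<noteq> g (mix w w' 1)"
    using \<open>f w \<noteq> f w'\<close> \<open>g w \<noteq> g w'\<close> by simp_all
  ultimately show ?thesis
    using w \<open>f w \<noteq> f w'\<close> mobius_rel_of_mobius_on by blast
qed

lemma mobius_relation:
  "\<exists>a b c d. a * d - b * c \<noteq> 0 \<and> (\<forall>z\<in>policies. mobius_rel a b c d (f z) (g z))"
proof -
  obtain w w' a b c d where w: "w \<in> B" "w' \<in> B" "f w \<noteq> f w'" and det: "a * d - b * c \<noteq> 0"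
    and on_segment: "\<forall>t\<in>{0..1}. mobius_rel a b c d (f (mix w w' t)) (g (mix w w' t))"
    using mobius_relation_on_segment by blast
  define lo hi where "lo = min (f w) (f w')" and "hi = max (f w) (f w')"
  \<comment> \<open>Level sets of \<open>f\<close> and \<open>g\<close> agree on \<open>B\<close>, so the relation spreads from the segment.\<close>
  have on_B: "mobius_rel a b c d (f x) (g x)" if x: "x \<in> B" "lo < f x" "f x < hi" for x
  proof -
    obtain t where t: "t \<in> {0..1}" "f (mix w w' t) = f x"
      using mix_attains[OF w(1,2), of "f x"] x(2,3) unfolding lo_def hi_def by auto
    have "mix w w' t \<in> B"
      using B_mix[OF w(1,2)] t(1) by simp
    then have "g (mix w w' t) = g x"
      using x(1) t(2) by (rule g_eq_if_f_eq)
    with t(2) show ?thesis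
      using bspec[OF on_segment t(1)] by simp
  qed
  have "min (f w) (f w') \<le> (f w + f w') / 2" "(f w + f w') / 2 \<le> max (f w) (f w')"
    by (auto simp: min_def max_def)
  then obtain t where t: "t \<in> {0..1}" "f (mix w w' t) = (f w + f w') / 2"
    using mix_attains[OF w(1,2)] by blast
  define m where "m = mix w w' t"
  have "m \<in> B"
    unfolding m_def using B_mix w t by auto
  then have "m \<in> policies"
    using B_policies by blast
  have "lo < f m" "f m < hi"
    using t w(3) unfolding m_def lo_def hi_def by auto
  have "mobius_rel a b c d (f z) (g z)" if "z \<in> policies" for z
  proof (rule mobius_rel_extends[OF \<open>m \<in> policies\<close> that])
    show "eventually (\<lambda>t. mobius_rel a b c d (f (mix m z' t)) (g (mix m z' t))) (at_right 0)"
      if "z' \<in> policies" for z'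
      using eventually_mix_between[OF \<open>m \<in> B\<close> that \<open>lo < f m\<close> \<open>f m < hi\<close>]
      by eventually_elim (simp add: on_B)
  qed
  with det show ?thesis
    by blast
qed

lemma equivalent: "equivalent_on f g P"
  unfolding equivalent_on_def
proof (intro ballI)
  fix x y
  assume "x \<in> P" "y \<in> P"
  obtain a b c d where det: "a * d - b * c \<noteq> 0"
    and rel: "\<forall>z\<in>policies. mobius_rel a b c d (f z) (g z)"
    using mobius_relation by blast
  have x: "x \<in> policies" and y: "y \<in> policies"
    using \<open>x \<in> P\<close> \<open>y \<in> P\<close> P_policies by auto
  have "f x = f y \<longleftrightarrow> g x = g y"
  proof
    assume "f x = f y"
    with bspec[OF rel y] have "mobius_rel a b c d (f x) (g y)"
      by simp
    with bspec[OF rel x] show "g x = g y"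
      by (rule mobius_rel_right_unique[OF det])
  next
    assume "g x = g y"
    with bspec[OF rel y] have "mobius_rel a b c d (f y) (g x)"
      by simp
    with bspec[OF rel x] show "f x = f y"
      by (rule mobius_rel_left_unique[OF det])
  qed
  moreover have "f x > f y \<Longrightarrow> g x \<ge> g y" "f y > f x \<Longrightarrow> g y \<ge> g x"
    using no_exploit \<open>x \<in> P\<close> \<open>y \<in> P\<close> by auto
  ultimately show "f y \<le> f x \<longleftrightarrow> g y \<le> g x"
    by linarith
qed

end

definition policy_box :: "('s::finite \<Rightarrow> 'a::finite \<Rightarrow> real) \<Rightarrow> real \<Rightarrow> ('s \<Rightarrow> 'a \<Rightarrow> real) set" where
  "policy_box u \<epsilon> = {w \<in> policies. \<forall>s a. \<bar>w s a - u s a\<bar> < \<epsilon>}"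

lemma center_in_policy_box: "u \<in> policies \<Longrightarrow> 0 < \<epsilon> \<Longrightarrow> u \<in> policy_box u \<epsilon>"
  by (simp add: policy_box_def)

lemma fun_upd_in_policy_box:
  assumes "u \<in> policies" "w \<in> policy_box u \<epsilon>"
  shows "w(s := u s) \<in> policy_box u \<epsilon>"
proof -
  have "0 < \<epsilon>"
    using assms(2) abs_ge_zero[of "w s a - u s a" for a] unfolding policy_box_def by fastforce
  with assms show ?thesis
    by (auto simp: policy_box_def policies_def)
qed

lemma mix_in_policy_box:
  assumes "w \<in> policy_box u \<epsilon>" "w' \<in> policy_box u \<epsilon>" "0 \<le> t" "t \<le> 1"
  shows "mix w w' t \<in> policy_box u \<epsilon>"
proof -
  have "\<bar>mix w w' t s a - u s a\<bar> < \<epsilon>" for s a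
  proof -
    have "\<bar>mix w w' t s a - u s a\<bar> = \<bar>(1 - t) * (w s a - u s a) + t * (w' s a - u s a)\<bar>"
      by (simp add: mix_def algebra_simps)
    also have "\<dots> \<le> (1 - t) * \<bar>w s a - u s a\<bar> + t * \<bar>w' s a - u s a\<bar>"
      using assms(3,4) by (metis abs_mult abs_of_nonneg abs_triangle_ineq diff_ge_0_iff_ge)
    also have "\<dots> < \<epsilon>"
      using assms by (intro convex_bound_lt) (auto simp: policy_box_def)
    finally show ?thesis .
  qed
  with assms show ?thesis
    by (simp add: policy_box_def mix_in_policies)
qed

lemma eventually_mix_in_policy_box:
  assumes w: "w \<in> policy_box u \<epsilon>" and z: "z \<in> policies"
  shows "eventually (\<lambda>t. mix w z t \<in> policy_box u \<epsilon>) (at_right 0)"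
proof -
  have "eventually (\<lambda>t. \<bar>mix w z t s a - u s a\<bar> < \<epsilon>) (at_right 0)" for s a
  proof (rule order_tendstoD(2))
    show "((\<lambda>t. \<bar>mix w z t s a - u s a\<bar>) \<longlongrightarrow> \<bar>w s a - u s a\<bar>) (at_right 0)"
      unfolding mix_def by (auto intro!: tendsto_eq_intros)
    show "\<bar>w s a - u s a\<bar> < \<epsilon>"
      using w by (simp add: policy_box_def)
  qed
  then have "eventually (\<lambda>t. \<forall>s a. \<bar>mix w z t s a - u s a\<bar> < \<epsilon>) (at_right 0)"
    by (intro eventually_all_finite)
  then show ?thesis
    using eventually_at_right_0_in_unit_interval
  proof eventually_elim
    case (elim t)
    with w z show ?case
      by (simp add: policy_box_def mix_in_policies)
  qed
qed

lemma open_contains_coordinate_box: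
  fixes S :: "('s::finite \<Rightarrow> 'a::finite \<Rightarrow> real) set"
  assumes "open S" "u \<in> S"
  obtains e where "0 < e" "\<And>w. (\<forall>s a. \<bar>w s a - u s a\<bar> < e) \<Longrightarrow> w \<in> S"
proof -
  define flat :: "real^('s \<times> 'a) \<Rightarrow> 's \<Rightarrow> 'a \<Rightarrow> real" where "flat v = (\<lambda>s a. v $ (s, a))" for v
  define v0 where "v0 = (\<chi> p. u (fst p) (snd p))"
  have "continuous_on UNIV flat"
    unfolding flat_def
    by (intro continuous_on_coordinatewise_then_product linear_continuous_on bounded_linear_vec_nth)
  then have "open (flat -` S)"
    by (rule open_vimage[OF assms(1)])
  moreover have "v0 \<in> flat -` S"
    using assms(2) by (simp add: flat_def v0_def)
  ultimately obtain r where "0 < r" and r: "ball v0 r \<subseteq> flat -` S"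
    using open_contains_ball by blast
  have "w \<in> S" if w: "\<forall>s a. \<bar>w s a - u s a\<bar> < r / CARD('s \<times> 'a)" for w
  proof -
    define v where "v = (\<chi> p. w (fst p) (snd p))"
    have "dist v0 v \<le> (\<Sum>p\<in>UNIV. \<bar>(v - v0) $ p\<bar>)"
      using norm_le_l1_cart[of "v - v0"] by (simp add: dist_norm norm_minus_commute)
    also have "\<dots> < (\<Sum>p\<in>(UNIV :: ('s \<times> 'a) set). r / CARD('s \<times> 'a))"
      using w by (intro sum_strict_mono) (auto simp: v_def v0_def)
    also have "\<dots> = r"
      by simp
    finally show "w \<in> S"
      using r by (auto simp: flat_def v_def)
  qed
  moreover have "0 < r / CARD('s \<times> 'a)"
    using \<open>0 < r\<close> by simp
  ultimately show ?thesis
    using that by blast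
qed

lemma policy_box_subset_open:
  fixes U :: "('s::finite \<Rightarrow> 'a::finite \<Rightarrow> real) set"
  assumes "openin (top_of_set policies_pos) U" "u \<in> U"
  obtains \<epsilon> where "0 < \<epsilon>" "policy_box u \<epsilon> \<subseteq> U"
proof -
  obtain S where "open S" and U: "U = policies_pos \<inter> S"
    using assms(1) unfolding openin_open by blast
  then obtain e where "0 < e" and e: "\<And>w. (\<forall>s a. \<bar>w s a - u s a\<bar> < e) \<Longrightarrow> w \<in> S"
    using assms(2) open_contains_coordinate_box by blast
  define m where "m = Min ((\<lambda>p. u (fst p) (snd p)) ` UNIV)"
  have "0 < m"
    using assms(2) U unfolding m_def by (simp add: policies_pos_def)
  have m: "m \<le> u s a" for s a
    unfolding m_def by (rule Min_le) (auto intro: range_eqI[of _ _ "(s, a)"])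
  have "policy_box u (min e m) \<subseteq> U"
  proof
    fix w
    assume w: "w \<in> policy_box u (min e m)"
    then have "w \<in> S"
      using e by (simp add: policy_box_def)
    moreover have "0 < w s a" for s a
      using w m[of s a] unfolding policy_box_def by (smt (verit) mem_Collect_eq)
    ultimately show "w \<in> U"
      using w U by (simp add: policy_box_def policies_pos_def)
  qed
  moreover have "0 < min e m"
    using \<open>0 < e\<close> \<open>0 < m\<close> by simp
  ultimately show ?thesis
    using that by blast
qed

theorem mainTheorem11:
  fixes d0 :: "'s::finite \<Rightarrow> real"
    and R :: "'s \<Rightarrow> 'a::finite \<Rightarrow> real"
    and \<gamma> :: real
    and P :: "('s \<Rightarrow> 'a \<Rightarrow> real) set"
  assumes "CARD('a) > 1"
    and "is_distrib d0"
    and "0 \<le> \<gamma>" and "\<gamma> < 1"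
    and "P \<subseteq> policies"
    and "\<exists>U. U \<noteq> {} \<and> U \<subseteq> P \<and> U \<subseteq> policies_pos \<and> openin (top_of_set policies_pos) U"
  shows "\<forall>T\<in>transition_models. \<forall>T'\<in>transition_models.
           all_reachable d0 T \<and> all_reachable d0 T' \<and>
           \<not> trivial_on (J d0 R \<gamma> T) P \<and> \<not> trivial_on (J d0 R \<gamma> T') P \<and>
           \<not> equivalent_on (J d0 R \<gamma> T) (J d0 R \<gamma> T') P
           \<longrightarrow> exploitable d0 R \<gamma> T T' P"
proof (intro ballI impI)
  fix T T'
  assume T: "T \<in> transition_models" and T': "T' \<in> transition_models"
    and H: "all_reachable d0 T \<and> all_reachable d0 T' \<and>
      \<not> trivial_on (J d0 R \<gamma> T) P \<and> \<not> trivial_on (J d0 R \<gamma> T') P \<and>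
      \<not> equivalent_on (J d0 R \<gamma> T) (J d0 R \<gamma> T') P"
  obtain U u where U: "U \<subseteq> P" "U \<subseteq> policies_pos" "openin (top_of_set policies_pos) U" and "u \<in> U"
    using assms(6) by blast
  then obtain \<epsilon> where "0 < \<epsilon>" "policy_box u \<epsilon> \<subseteq> U"
    by (meson policy_box_subset_open)
  have "u \<in> policies"
    using \<open>u \<in> U\<close> U(2) by (auto simp: policies_pos_def)
  show "exploitable d0 R \<gamma> T T' P"
  proof (rule ccontr)
    assume "\<not> exploitable d0 R \<gamma> T T' P"
    then have "J d0 R \<gamma> T' x \<ge> J d0 R \<gamma> T' y"
      if "x \<in> P" "y \<in> P" "J d0 R \<gamma> T x > J d0 R \<gamma> T y" for x y
      using that unfolding exploitable_def by (meson not_le)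
    then interpret unexploitable_pair "J d0 R \<gamma> T" "J d0 R \<gamma> T'" P "policy_box u \<epsilon>" u
      using assms(2-5) T T' H U(1) \<open>policy_box u \<epsilon> \<subseteq> U\<close> \<open>u \<in> policies\<close> \<open>0 < \<epsilon>\<close>
      by unfold_locales (auto simp: J_rational_along_segments
          J_mobius_along_state_changes center_in_policy_box mix_in_policy_box
          eventually_mix_in_policy_box fun_upd_in_policy_box)
    show False
      using equivalent H by blast
  qed
qed

end
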